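(* $\mathrm{Log}_{>1}(\mathbb{R})$ does not have the finite model property: there is a modal formula that is not in $\mathrm{Log}_{>1}(\mathbb{R})$ but is valid in every finite frame in which all formulas of $\mathrm{Log}_{>1}(\mathbb{R})$ are valid.
   Context: Modal formulas are built from a countable set of propositional variables using $\bot$, $\to$ and one unary modality $\lozenge$. A frame is a pair $(X,R)$; a valuation assigns subsets of $X$ to variables; $x\models\lozenge\varphi$ iff there is $y$ with $xRy$ and $y\models\varphi$. A formula is valid in a frame if true at every point under every valuation. $\mathrm{Log}_{>1}(\mathbb{R})$ is the set of formulas valid in the frame $(\mathbb{R},R_{>1})$ with $xR_{>1}y$ iff $|x-y|>1$. A logic $L$ has the finite model property if it is the set of formulas valid in some class of finite frames (equivalently, in the class of all finite frames validating $L$). *)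

theory Defs
  imports Complex_Main
begin

datatype fm = Var nat | Bot | Imp fm fm | Dia fm

fun sat :: "'a set \<Rightarrow> ('a \<Rightarrow> 'a \<Rightarrow> bool) \<Rightarrow> (nat \<Rightarrow> 'a set) \<Rightarrow> 'a \<Rightarrow> fm \<Rightarrow> bool" where
  "sat W R V x (Var n) = (x \<in> V n)"
| "sat W R V x Bot = False"
| "sat W R V x (Imp p q) = (sat W R V x p \<longrightarrow> sat W R V x q)"
| "sat W R V x (Dia p) = (\<exists>y\<in>W. R x y \<and> sat W R V y p)"

definition valid_in :: "'a set \<Rightarrow> ('a \<Rightarrow> 'a \<Rightarrow> bool) \<Rightarrow> fm \<Rightarrow> bool" where
  "valid_in W R p \<longleftrightarrow> (\<forall>V. (\<forall>n. V n \<subseteq> W) \<longrightarrow> (\<forall>x\<in>W. sat W R V x p))"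

definition R_gt1 :: "real \<Rightarrow> real \<Rightarrow> bool" where
  "R_gt1 x y \<longleftrightarrow> \<bar>x - y\<bar> > 1"

definition Log_gt1_R :: "fm set" where
  "Log_gt1_R = {p. valid_in (UNIV :: real set) R_gt1 p}"

end

theory Submission
  imports Defs
begin

text \<open>On the real line, \<open>\<box>\<not>\<phi>\<close> defines \<open>near_all A\<close>, the set of points within distance 1
of every point of the extension \<open>A\<close> of \<open>\<phi>\<close>, and \<open>\<box>\<box>\<close> is the universal modality.
The fixed points of \<open>near_all\<close> are exactly the unit intervals \<open>[a, a + 1]\<close>, and a formula
\<open>jump \<phi> \<psi>\<close> sends singleton extensions \<open>{u}, {v}\<close> with \<open>0 < \<bar>v - u\<bar> < 1\<close> to \<open>{u + s}\<close>,
where \<open>s = sgn (v - u)\<close>. The new gap \<open>u + s - v\<close> again has sign \<open>s\<close> and modulus \<open>1 - \<bar>v - u\<bar>\<close>.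
So starting from two overlapping unit intervals (the premise \<open>start\<close>), the formulas
\<open>chain (n + 2) = jump (chain n) (chain (n + 1))\<close> define the points of the strictly monotone
sequence \<open>u, v, u + s, v + s, u + 2s, \<dots>\<close>, and
\<open>start \<rightarrow> \<not>\<box>\<box>(chain j \<leftrightarrow> chain k)\<close> is valid on the reals for \<open>j \<noteq> k\<close>, while \<open>start\<close>
is satisfiable there. In a finite frame the formulas \<open>chain n\<close> have only finitely many
extensions, so two of them coincide, and \<open>\<not>start\<close> is valid in every finite frame of the logic.\<close>

definition Neg :: "fm \<Rightarrow> fm" where "Neg f = Imp f Bot"
definition Box :: "fm \<Rightarrow> fm" where "Box f = Neg (Dia (Neg f))"
definition And :: "fm \<Rightarrow> fm \<Rightarrow> fm" where "And f g = Neg (Imp f (Neg g))"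
definition Iff :: "fm \<Rightarrow> fm \<Rightarrow> fm" where "Iff f g = And (Imp f g) (Imp g f)"

lemma sat_Neg [simp]: "sat W R V x (Neg f) \<longleftrightarrow> \<not> sat W R V x f"
  by (simp add: Neg_def)

lemma sat_Box [simp]: "sat W R V x (Box f) \<longleftrightarrow> (\<forall>y\<in>W. R x y \<longrightarrow> sat W R V y f)"
  by (auto simp add: Box_def)

lemma sat_And [simp]: "sat W R V x (And f g) \<longleftrightarrow> sat W R V x f \<and> sat W R V x g"
  by (auto simp add: And_def)

lemma sat_Iff [simp]: "sat W R V x (Iff f g) \<longleftrightarrow> (sat W R V x f \<longleftrightarrow> sat W R V x g)"
  by (auto simp add: Iff_def)

subsection \<open>Finite frames\<close>

lemma finite_frame_extensions_collide:
  assumes "finite W"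
  obtains j k :: nat where "j \<noteq> k" "\<forall>y\<in>W. sat W R V y (f j) \<longleftrightarrow> sat W R V y (f k)"
proof -
  let ?ext = "\<lambda>n. {y\<in>W. sat W R V y (f n)}"
  have "finite (range ?ext)"
    by (rule finite_subset[of _ "Pow W"]) (use assms in auto)
  have "\<not> inj ?ext"
  proof
    assume "inj ?ext"
    with \<open>finite (range ?ext)\<close> have "finite (UNIV :: nat set)"
      by (rule finite_imageD)
    then show False
      by simp
  qed
  then obtain j k where "j \<noteq> k" "?ext j = ?ext k"
    unfolding inj_def by blast
  then show thesis
    using that by blast
qed

lemma valid_Neg_in_finite_frame:
  fixes f :: "nat \<Rightarrow> fm"
  assumes "finite W"
    and distinct: "\<And>j k. j \<noteq> k \<Longrightarrow> valid_in W R (Imp \<phi> (Neg (Box (Box (Iff (f j) (f k))))))"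
  shows "valid_in W R (Neg \<phi>)"
  unfolding valid_in_def
proof (intro allI impI ballI)
  fix V :: "nat \<Rightarrow> 'a set" and x
  assume "\<forall>n. V n \<subseteq> W" "x \<in> W"
  obtain j k where "j \<noteq> k" and collide: "\<forall>y\<in>W. sat W R V y (f j) \<longleftrightarrow> sat W R V y (f k)"
    using finite_frame_extensions_collide[OF \<open>finite W\<close>, where R = R and V = V and f = f] .
  have "sat W R V x (Imp \<phi> (Neg (Box (Box (Iff (f j) (f k))))))"
    using distinct[OF \<open>j \<noteq> k\<close>] \<open>\<forall>n. V n \<subseteq> W\<close> \<open>x \<in> W\<close> unfolding valid_in_def by blast
  then show "sat W R V x (Neg \<phi>)"
    using collide by auto
qed

subsection \<open>Unit neighbourhoods on the real line\<close>

definition near_all :: "real set \<Rightarrow> real set" where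
  "near_all A = {x. \<forall>y\<in>A. \<bar>x - y\<bar> \<le> 1}"

lemma near_all_empty: "near_all {} = UNIV"
  by (simp add: near_all_def)

lemma near_all_UNIV: "near_all UNIV = {}"
proof -
  have "x \<notin> near_all UNIV" for x
    by (auto simp add: near_all_def intro!: exI[of _ "x + 2"])
  then show ?thesis by blast
qed

lemma near_all_bounded:
  assumes "S \<noteq> {}" "bdd_below S" "bdd_above S"
  shows "near_all S = {Sup S - 1..Inf S + 1}"
proof (rule set_eqI)
  fix x
  have "x \<in> near_all S \<longleftrightarrow> (\<forall>y\<in>S. x - 1 \<le> y) \<and> (\<forall>y\<in>S. y \<le> x + 1)"
    by (auto simp add: near_all_def abs_le_iff)
  also have "\<dots> \<longleftrightarrow> x - 1 \<le> Inf S \<and> Sup S \<le> x + 1"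
    using assms by (simp add: le_cInf_iff cSup_le_iff)
  finally show "x \<in> near_all S \<longleftrightarrow> x \<in> {Sup S - 1..Inf S + 1}"
    by auto
qed

lemma near_all_Icc: "a \<le> b \<Longrightarrow> near_all {a..b} = {b - 1..a + 1}"
  by (simp add: near_all_bounded)

lemma near_all_Ioc: "a < b \<Longrightarrow> near_all {a<..b} = {b - 1..a + 1}"
  by (simp add: near_all_bounded)

lemma near_all_Ico: "a < b \<Longrightarrow> near_all {a..<b} = {b - 1..a + 1}"
  by (simp add: near_all_bounded)

lemma near_all_fixed_point:
  assumes "near_all S = S"
  shows "S = {Inf S..Inf S + 1}"
proof -
  have "S \<noteq> {}"
    using assms near_all_empty by auto
  then obtain s where "s \<in> S" by blast
  have "S \<subseteq> {s - 1..s + 1}"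
  proof
    fix y
    assume "y \<in> S"
    then have "y \<in> near_all S"
      using assms by simp
    then show "y \<in> {s - 1..s + 1}"
      using \<open>s \<in> S\<close> by (auto simp add: near_all_def abs_le_iff)
  qed
  then have "bdd_below S" "bdd_above S"
    by (auto intro: bdd_below_mono bdd_above_mono)
  then have S: "S = {Sup S - 1..Inf S + 1}"
    using assms near_all_bounded[OF \<open>S \<noteq> {}\<close>] by simp
  then have "Inf S = Sup S - 1"
    using \<open>S \<noteq> {}\<close> by (metis atLeastatMost_empty_iff cInf_atLeastAtMost)
  then show ?thesis
    using S by simp
qed

definition jump_set :: "real set \<Rightarrow> real set \<Rightarrow> real set" where
  "jump_set A B = near_all (near_all (near_all B - near_all A)) - (near_all B - near_all A)"

lemma jump_set_singletons:
  assumes "\<bar>s\<bar> = 1" "0 < s * (v - u)" "s * (v - u) < 1"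
  shows "jump_set {u} {v} = {u + s}"
proof -
  have near_point: "near_all {x} = {x - 1..x + 1}" for x
    using near_all_Icc[of x x] by simp
  consider "s = 1" "u < v" "v < u + 1" | "s = -1" "v < u" "u < v + 1"
    using assms by (cases "s \<ge> 0") (auto simp add: abs_if)
  then show ?thesis
  proof cases
    case 1
    then have "near_all {v} - near_all {u} = {u + 1<..v + 1}"
      by (auto simp add: near_point)
    moreover have "near_all (near_all {u + 1<..v + 1}) = {u + 1..v + 1}"
      using 1 by (simp add: near_all_Ioc near_all_Icc)
    ultimately show ?thesis
      using 1 unfolding jump_set_def by auto
  next
    case 2
    then have "near_all {v} - near_all {u} = {v - 1..<u - 1}"
      by (auto simp add: near_point)
    moreover have "near_all (near_all {v - 1..<u - 1}) = {v - 1..u - 1}"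
      using 2 by (simp add: near_all_Ico near_all_Icc)
    ultimately show ?thesis
      using 2 unfolding jump_set_def by auto
  qed
qed

lemma jump_set_unit_intervals:
  "jump_set {a..a + 1} {c..c + 1} =
    (if 0 < c - a \<and> c - a \<le> 1 then {a + 1} else if -1 \<le> c - a \<and> c - a < 0 then {a} else {})"
proof -
  have unit: "near_all {x..x + 1} = {x..x + 1}" for x
    by (simp add: near_all_Icc)
  consider "0 < c - a \<and> c - a \<le> 1" | "-1 \<le> c - a \<and> c - a < 0" | "c = a" | "\<bar>c - a\<bar> > 1"
    by linarith
  then show ?thesis
  proof cases
    case 1
    then have "{c..c + 1} - {a..a + 1} = {a + 1<..c + 1}" by auto
    moreover have "near_all (near_all {a + 1<..c + 1}) = {a + 1..c + 1}"
      using 1 by (simp add: near_all_Ioc near_all_Icc)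
    ultimately show ?thesis
      using 1 unfolding jump_set_def unit by auto
  next
    case 2
    then have "{c..c + 1} - {a..a + 1} = {c..<a}" by auto
    moreover have "near_all (near_all {c..<a}) = {c..a}"
      using 2 by (simp add: near_all_Ico near_all_Icc)
    ultimately show ?thesis
      using 2 unfolding jump_set_def unit by auto
  next
    case 3
    then show ?thesis
      unfolding jump_set_def unit by (simp add: near_all_empty near_all_UNIV)
  next
    case 4
    then have "{c..c + 1} - {a..a + 1} = {c..c + 1}"
      and "\<not> (0 < c - a \<and> c - a \<le> 1)" "\<not> (-1 \<le> c - a \<and> c - a < 0)"
      by auto
    then show ?thesis
      unfolding jump_set_def by (simp add: unit)
  qed
qed

fun progression :: "real \<Rightarrow> real \<Rightarrow> real \<Rightarrow> nat \<Rightarrow> real" where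
  "progression u v s 0 = u"
| "progression u v s (Suc 0) = v"
| "progression u v s (Suc (Suc n)) = progression u v s n + s"

lemma progression_step:
  assumes "\<bar>s\<bar> = 1" "0 < s * (v - u)" "s * (v - u) < 1"
  shows "0 < s * (progression u v s (Suc n) - progression u v s n)
    \<and> s * (progression u v s (Suc n) - progression u v s n) < 1"
proof (induction n)
  case 0
  show ?case
    using assms by simp
next
  case (Suc n)
  have "s * s = 1"
    using assms(1) by (metis abs_mult_self_eq mult_1_right)
  then have "s * (progression u v s (Suc (Suc n)) - progression u v s (Suc n))
      = 1 - s * (progression u v s (Suc n) - progression u v s n)"
    by (simp add: algebra_simps)
  then show ?case
    using Suc.IH by simp
qed

lemma progression_strict_mono:
  assumes "\<bar>s\<bar> = 1" "0 < s * (v - u)" "s * (v - u) < 1"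
  shows "strict_mono (\<lambda>n. s * progression u v s n)"
  unfolding strict_mono_Suc_iff
  using progression_step[OF assms] by (simp add: algebra_simps)

subsection \<open>The formulas and their meaning on the real line\<close>

definition jump :: "fm \<Rightarrow> fm \<Rightarrow> fm" where
  "jump f g = And (Box (Dia (And (Dia f) (Box (Neg g))))) (Neg (And (Dia f) (Box (Neg g))))"

fun chain :: "nat \<Rightarrow> fm" where
  "chain 0 = jump (Var 0) (Var 1)"
| "chain (Suc 0) = jump (Var 1) (Var 0)"
| "chain (Suc (Suc n)) = jump (chain n) (chain (Suc n))"

definition start :: fm where
  "start = And (And (And (Box (Box (Iff (Var 0) (Box (Neg (Var 0))))))
                         (Box (Box (Iff (Var 1) (Box (Neg (Var 1)))))))
                    (Dia (Dia (chain 0))))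
               (Neg (Dia (Dia (And (chain 0) (chain 1)))))"

abbreviation ext_R :: "(nat \<Rightarrow> real set) \<Rightarrow> fm \<Rightarrow> real set" where
  "ext_R V f \<equiv> {x. sat UNIV R_gt1 V x f}"

lemma ext_R_Dia: "ext_R V (Dia f) = - near_all (ext_R V f)"
  by (auto simp add: near_all_def R_gt1_def not_le[symmetric])

lemma ext_R_Box: "ext_R V (Box f) = near_all (- ext_R V f)"
  by (auto simp add: near_all_def R_gt1_def not_le[symmetric])

lemma ext_R_Neg: "ext_R V (Neg f) = - ext_R V f"
  by auto

lemma ext_R_And: "ext_R V (And f g) = ext_R V f \<inter> ext_R V g"
  by auto

lemma ext_R_jump: "ext_R V (jump f g) = jump_set (ext_R V f) (ext_R V g)"
  unfolding jump_def jump_set_def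
  by (simp only: ext_R_And ext_R_Neg ext_R_Dia ext_R_Box double_compl Diff_eq Int_commute)

lemma R_gt1_far_point: "R_gt1 x (max x y + 2) \<and> R_gt1 (max x y + 2) y"
  by (auto simp add: R_gt1_def)

lemma sat_Box_Box_real: "sat UNIV R_gt1 V x (Box (Box f)) \<longleftrightarrow> (\<forall>y. sat UNIV R_gt1 V y f)"
  using R_gt1_far_point by auto

lemma sat_Dia_Dia_real: "sat UNIV R_gt1 V x (Dia (Dia f)) \<longleftrightarrow> (\<exists>y. sat UNIV R_gt1 V y f)"
  using R_gt1_far_point by auto

lemma sat_start_real:
  "sat UNIV R_gt1 V x start \<longleftrightarrow>
     near_all (V 0) = V 0 \<and> near_all (V 1) = V 1 \<and>
     jump_set (V 0) (V 1) \<noteq> {} \<and> jump_set (V 0) (V 1) \<inter> jump_set (V 1) (V 0) = {}"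
proof -
  have fixed: "(\<forall>y. sat UNIV R_gt1 V y (Iff (Var i) (Box (Neg (Var i))))) \<longleftrightarrow> near_all (V i) = V i"
    for i
  proof -
    have "ext_R V (Box (Neg (Var i))) = near_all (V i)"
      by (simp only: ext_R_Box ext_R_Neg) simp
    then show ?thesis
      by (simp only: set_eq_iff mem_Collect_eq sat_Iff sat.simps) blast
  qed
  have "ext_R V (chain 0) = jump_set (V 0) (V 1)" "ext_R V (chain 1) = jump_set (V 1) (V 0)"
    by (simp_all only: chain.simps One_nat_def ext_R_jump) simp_all
  then show ?thesis
    unfolding start_def sat_And sat_Neg sat_Box_Box_real sat_Dia_Dia_real fixed by auto
qed

lemma start_real_progression:
  assumes "sat UNIV R_gt1 V x start"
  obtains u v s where "\<bar>s\<bar> = 1" "0 < s * (v - u)" "s * (v - u) < 1"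
    "ext_R V (chain 0) = {u}" "ext_R V (chain 1) = {v}"
proof -
  have "near_all (V 0) = V 0" "near_all (V 1) = V 1"
    and nonempty: "jump_set (V 0) (V 1) \<noteq> {}"
    and disjoint: "jump_set (V 0) (V 1) \<inter> jump_set (V 1) (V 0) = {}"
    using assms sat_start_real by blast+
  then obtain a c where V: "V 0 = {a..a + 1}" "V 1 = {c..c + 1}"
    using near_all_fixed_point by metis
  have chain01: "ext_R V (chain 0) = jump_set (V 0) (V 1)" "ext_R V (chain 1) = jump_set (V 1) (V 0)"
    by (simp_all only: chain.simps One_nat_def ext_R_jump) simp_all
  show thesis
  proof (cases "0 < c - a \<and> c - a \<le> 1")
    case True
    then have "jump_set (V 0) (V 1) = {a + 1}" "jump_set (V 1) (V 0) = {c}"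
      unfolding V jump_set_unit_intervals by auto
    then show thesis
      using that[where u = "a + 1" and v = c and s = "-1"] True disjoint chain01 by auto
  next
    case False
    then have "-1 \<le> c - a \<and> c - a < 0"
      using nonempty unfolding V jump_set_unit_intervals by (auto split: if_splits)
    then have "jump_set (V 0) (V 1) = {a}" "jump_set (V 1) (V 0) = {c + 1}"
      unfolding V jump_set_unit_intervals by auto
    then show thesis
      using that[where u = a and v = "c + 1" and s = 1] \<open>-1 \<le> c - a \<and> c - a < 0\<close> disjoint chain01 by auto
  qed
qed

lemma ext_R_chain_progression:
  assumes "\<bar>s\<bar> = 1" "0 < s * (v - u)" "s * (v - u) < 1"
    and "ext_R V (chain 0) = {u}" "ext_R V (chain 1) = {v}"
  shows "ext_R V (chain n) = {progression u v s n}"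
proof (induction n rule: chain.induct)
  case (3 n)
  have "ext_R V (chain (Suc (Suc n))) = jump_set {progression u v s n} {progression u v s (Suc n)}"
    using 3 by (simp only: chain.simps ext_R_jump)
  also have "\<dots> = {progression u v s (Suc (Suc n))}"
    using jump_set_singletons[OF assms(1)] progression_step[OF assms(1-3), of n] by simp
  finally show ?case .
qed (use assms in simp_all)

lemma start_real_chain_inj:
  assumes "sat UNIV R_gt1 V x start"
  shows "inj (\<lambda>n. ext_R V (chain n))"
proof -
  obtain u v s where prog: "\<bar>s\<bar> = 1" "0 < s * (v - u)" "s * (v - u) < 1"
    and "ext_R V (chain 0) = {u}" "ext_R V (chain 1) = {v}"
    using start_real_progression[OF assms] .
  then have "ext_R V (chain n) = {progression u v s n}" for n
    by (rule ext_R_chain_progression)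
  moreover have "inj (\<lambda>n. s * progression u v s n)"
    using progression_strict_mono[OF prog] by (rule strict_mono_imp_inj_on)
  ultimately show ?thesis
    by (auto intro!: injI dest: injD)
qed

lemma chains_distinct_in_Log_gt1_R:
  assumes "j \<noteq> k"
  shows "Imp start (Neg (Box (Box (Iff (chain j) (chain k))))) \<in> Log_gt1_R"
  unfolding Log_gt1_R_def valid_in_def
proof (intro CollectI allI impI ballI)
  fix V x
  have "sat UNIV R_gt1 V x start \<Longrightarrow> ext_R V (chain j) \<noteq> ext_R V (chain k)"
    using start_real_chain_inj \<open>j \<noteq> k\<close> by (blast dest: injD)
  then show "sat UNIV R_gt1 V x (Imp start (Neg (Box (Box (Iff (chain j) (chain k))))))"
    unfolding sat.simps sat_Neg sat_Box_Box_real sat_Iff by blast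
qed

lemma Neg_start_notin_Log_gt1_R: "Neg start \<notin> Log_gt1_R"
proof
  define V :: "nat \<Rightarrow> real set" where "V = (\<lambda>n. if n = 0 then {0..0 + 1} else {1/2..1/2 + 1})"
  have V: "V 0 = {0..0 + 1}" "V 1 = {1/2..1/2 + 1}"
    by (simp_all add: V_def)
  have "near_all (V 0) = V 0" "near_all (V 1) = V 1"
    unfolding V by (simp_all add: near_all_Icc)
  moreover have "jump_set (V 0) (V 1) = {1}" "jump_set (V 1) (V 0) = {1/2}"
    unfolding V jump_set_unit_intervals by simp_all
  ultimately have "sat UNIV R_gt1 V 0 start"
    unfolding sat_start_real by simp
  moreover assume "Neg start \<in> Log_gt1_R"
  ultimately show False
    unfolding Log_gt1_R_def valid_in_def by auto
qed

theorem theorem5p8: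
  shows "\<exists>p. p \<notin> Log_gt1_R \<and>
    (\<forall>(W :: nat set) (R :: nat \<Rightarrow> nat \<Rightarrow> bool). finite W \<longrightarrow>
        (\<forall>q\<in>Log_gt1_R. valid_in W R q) \<longrightarrow> valid_in W R p)"
proof (intro exI conjI allI impI)
  show "Neg start \<notin> Log_gt1_R"
    by (rule Neg_start_notin_Log_gt1_R)
next
  fix W :: "nat set" and R :: "nat \<Rightarrow> nat \<Rightarrow> bool"
  assume "finite W" and "\<forall>q\<in>Log_gt1_R. valid_in W R q"
  then show "valid_in W R (Neg start)"
    using valid_Neg_in_finite_frame chains_distinct_in_Log_gt1_R by blast
qed

end
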